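(* Let $\mathfrak{g}$ be a finite-dimensional Lie algebra over a field $K$ of characteristic zero, and let $x\cdot y=[\phi(x),y]$ be an inner CPA-structure on $\mathfrak{g}$, with $\phi$ a Lie algebra endomorphism, and $A=(\mathfrak{g},\cdot)$. Define $I_0=0$ and $I_n=\{x\in\mathfrak{g}\mid x\cdot\mathfrak{g}\subseteq I_{n-1}\}$ for $n\ge1$. Then $\phi(I_n)\subseteq I_n$ for all $n$, and every Lie algebra ideal of $\mathfrak{g}$ is an ideal of the algebra $A$. Conversely, if the structure is nondegenerate, every ideal of the algebra $A$ is a Lie algebra ideal.
   Context: A CPA-structure on $\mathfrak{g}$ is a bilinear product $x\cdot y$ satisfying, for all $x,y,z$: $x\cdot y=y\cdot x$; $[x,y]\cdot z=x\cdot(y\cdot z)-y\cdot(x\cdot z)$; $x\cdot[y,z]=[x\cdot y,z]+[y,x\cdot z]$. It is inner if $x\cdot y=[\phi(x),y]$ with $\phi$ a Lie algebra homomorphism $\mathfrak{g}\to\mathfrak{g}$. It is nondegenerate if $\{x\mid x\cdot y=0\ \forall y\}=0$. A subspace $J$ is an ideal of $A$ if $\mathfrak{g}\cdot J\subseteq J$. *)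

theory Defs
  imports Complex_Main
begin

definition lie_algebra :: "('k::field \<Rightarrow> 'v::ab_group_add \<Rightarrow> 'v) \<Rightarrow> ('v \<Rightarrow> 'v \<Rightarrow> 'v) \<Rightarrow> bool" where
  "lie_algebra sc br \<longleftrightarrow>
     vector_space sc \<and>
     (\<forall>x. Vector_Spaces.linear sc sc (br x)) \<and>
     (\<forall>y. Vector_Spaces.linear sc sc (\<lambda>x. br x y)) \<and>
     (\<forall>x. br x x = 0) \<and>
     (\<forall>x y z. br x (br y z) + br y (br z x) + br z (br x y) = 0)"

definition fin_dim :: "('k::field \<Rightarrow> 'v::ab_group_add \<Rightarrow> 'v) \<Rightarrow> bool" where
  "fin_dim sc \<longleftrightarrow> (\<exists>B. finite_dimensional_vector_space sc B)"

definition lie_endo :: "('k::field \<Rightarrow> 'v::ab_group_add \<Rightarrow> 'v) \<Rightarrow> ('v \<Rightarrow> 'v \<Rightarrow> 'v) \<Rightarrow> ('v \<Rightarrow> 'v) \<Rightarrow> bool" where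
  "lie_endo sc br \<phi> \<longleftrightarrow> Vector_Spaces.linear sc sc \<phi> \<and> (\<forall>x y. \<phi> (br x y) = br (\<phi> x) (\<phi> y))"

definition cpa_structure :: "('k::field \<Rightarrow> 'v::ab_group_add \<Rightarrow> 'v) \<Rightarrow> ('v \<Rightarrow> 'v \<Rightarrow> 'v) \<Rightarrow> ('v \<Rightarrow> 'v \<Rightarrow> 'v) \<Rightarrow> bool" where
  "cpa_structure sc br pr \<longleftrightarrow>
     (\<forall>x. Vector_Spaces.linear sc sc (pr x)) \<and>
     (\<forall>y. Vector_Spaces.linear sc sc (\<lambda>x. pr x y)) \<and>
     (\<forall>x y. pr x y = pr y x) \<and>
     (\<forall>x y z. pr (br x y) z = pr x (pr y z) - pr y (pr x z)) \<and>
     (\<forall>x y z. pr x (br y z) = br (pr x y) z + br y (pr x z))"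

definition nondegenerate :: "('v::ab_group_add \<Rightarrow> 'v \<Rightarrow> 'v) \<Rightarrow> bool" where
  "nondegenerate pr \<longleftrightarrow> {x. \<forall>y. pr x y = 0} = {0}"

definition alg_ideal :: "('k::field \<Rightarrow> 'v::ab_group_add \<Rightarrow> 'v) \<Rightarrow> ('v \<Rightarrow> 'v \<Rightarrow> 'v) \<Rightarrow> 'v set \<Rightarrow> bool" where
  "alg_ideal sc pr J \<longleftrightarrow> module.subspace sc J \<and> (\<forall>x y. y \<in> J \<longrightarrow> pr x y \<in> J)"

definition lie_ideal :: "('k::field \<Rightarrow> 'v::ab_group_add \<Rightarrow> 'v) \<Rightarrow> ('v \<Rightarrow> 'v \<Rightarrow> 'v) \<Rightarrow> 'v set \<Rightarrow> bool" where
  "lie_ideal sc br J \<longleftrightarrow> module.subspace sc J \<and> (\<forall>x y. y \<in> J \<longrightarrow> br x y \<in> J)"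

fun I_seq :: "('v::zero \<Rightarrow> 'v \<Rightarrow> 'v) \<Rightarrow> nat \<Rightarrow> 'v set" where
  "I_seq pr 0 = {0}"
| "I_seq pr (Suc n) = {x. \<forall>y. pr x y \<in> I_seq pr n}"

end

theory Submission
  imports Defs
begin

text \<open>For an inner CPA-structure \<open>x \<cdot> y = [\<phi> x, y]\<close>, commutativity and anticommutativity of
  the bracket give \<open>\<phi> x \<cdot> y = [\<phi> y, \<phi> x] = x \<cdot> (- \<phi> y)\<close>, so \<open>\<phi>\<close> preserves every \<open>I\<^sub>n\<close>.
  Lie ideals are \<open>A\<close>-ideals because \<open>x \<cdot> J = [\<phi> x, J]\<close>. If the structure is nondegenerate,
  \<open>ker \<phi>\<close> lies in the annihilator of \<open>A\<close>, so \<open>\<phi>\<close> is injective, hence bijective by finite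
  dimension, and then \<open>A\<close>-ideals are Lie ideals.\<close>

lemma lie_algebra_anticommute:
  assumes "lie_algebra sc br"
  shows "br y x = - br x y"
proof -
  have linx: "module_hom sc sc (br z)" and liny: "module_hom sc sc (\<lambda>x. br x z)"
    and alt: "br z z = 0" for z
    using assms unfolding lie_algebra_def linear_iff_module_hom by auto
  have "0 = br (x + y) (x + y)" by (rule alt[symmetric])
  also have "\<dots> = br x x + br x y + (br y x + br y y)"
    by (simp add: module_hom.add[OF liny] module_hom.add[OF linx])
  also have "\<dots> = br x y + br y x"
    by (simp add: alt)
  finally show ?thesis by (simp add: eq_neg_iff_add_eq_0 add.commute)
qed

lemma inner_cpa_phi_left_eq:
  assumes "lie_algebra sc br"
    and "cpa_structure sc br (\<lambda>x y. br (\<phi> x) y)"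
  shows "br (\<phi> (\<phi> x)) y = br (\<phi> x) (- \<phi> y)"
proof -
  have "br (\<phi> (\<phi> x)) y = br (\<phi> y) (\<phi> x)"
    using assms(2) unfolding cpa_structure_def by auto
  also have "\<dots> = - br (\<phi> x) (\<phi> y)"
    using lie_algebra_anticommute[OF assms(1)] .
  also have "\<dots> = br (\<phi> x) (- \<phi> y)"
    using assms(1) module_hom.neg unfolding lie_algebra_def linear_iff_module_hom
    by metis
  finally show ?thesis .
qed

lemma I_seq_image_subset:
  assumes "f 0 = 0"
    and "\<And>x y. pr (f x) y = pr x (g y)"
  shows "f ` I_seq pr n \<subseteq> I_seq pr n"
  using assms by (cases n) auto

lemma lie_ideal_imp_alg_ideal_inner:
  assumes "lie_ideal sc br J"
  shows "alg_ideal sc (\<lambda>x y. br (\<phi> x) y) J"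
  using assms unfolding lie_ideal_def alg_ideal_def by auto

lemma alg_ideal_inner_imp_lie_ideal:
  assumes "surj \<phi>"
    and "alg_ideal sc (\<lambda>x y. br (\<phi> x) y) J"
  shows "lie_ideal sc br J"
  using assms unfolding lie_ideal_def alg_ideal_def by (metis surjD)

lemma nondegenerate_inner_imp_inj:
  assumes "lie_algebra sc br"
    and "Vector_Spaces.linear sc sc \<phi>"
    and "nondegenerate (\<lambda>x y. br (\<phi> x) y)"
  shows "inj \<phi>"
proof -
  have "br 0 y = 0" for y
    using assms(1) module_hom.zero unfolding lie_algebra_def linear_iff_module_hom
    by metis
  then have "\<phi> x = 0 \<Longrightarrow> x = 0" for x
    using assms(3) unfolding nondegenerate_def by auto
  then show ?thesis
    using module_hom.inj_iff_eq_0 assms(2)[unfolded linear_iff_module_hom] by blast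
qed

theorem lemma2p11:
  fixes sc :: "'k::field_char_0 \<Rightarrow> 'v::ab_group_add \<Rightarrow> 'v"
    and br :: "'v \<Rightarrow> 'v \<Rightarrow> 'v"
    and \<phi> :: "'v \<Rightarrow> 'v"
  assumes "lie_algebra sc br"
    and "fin_dim sc"
    and "lie_endo sc br \<phi>"
    and "cpa_structure sc br (\<lambda>x y. br (\<phi> x) y)"
  shows "(\<forall>n. \<phi> ` I_seq (\<lambda>x y. br (\<phi> x) y) n \<subseteq> I_seq (\<lambda>x y. br (\<phi> x) y) n)
       \<and> (\<forall>J. lie_ideal sc br J \<longrightarrow> alg_ideal sc (\<lambda>x y. br (\<phi> x) y) J)
       \<and> (nondegenerate (\<lambda>x y. br (\<phi> x) y) \<longrightarrow>
            (\<forall>J. alg_ideal sc (\<lambda>x y. br (\<phi> x) y) J \<longrightarrow> lie_ideal sc br J))"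
proof (intro conjI allI impI)
  have lin: "Vector_Spaces.linear sc sc \<phi>"
    using assms(3) unfolding lie_endo_def by simp
  then have "\<phi> 0 = 0"
    unfolding linear_iff_module_hom by (rule module_hom.zero)
  then show "\<phi> ` I_seq (\<lambda>x y. br (\<phi> x) y) n \<subseteq> I_seq (\<lambda>x y. br (\<phi> x) y) n" for n
    by (rule I_seq_image_subset[where g = "\<lambda>y. - \<phi> y"])
      (use inner_cpa_phi_left_eq[OF assms(1,4)] in simp)
  show "alg_ideal sc (\<lambda>x y. br (\<phi> x) y) J" if "lie_ideal sc br J" for J
    using lie_ideal_imp_alg_ideal_inner[OF that] .
  show "lie_ideal sc br J"
    if "nondegenerate (\<lambda>x y. br (\<phi> x) y)" and "alg_ideal sc (\<lambda>x y. br (\<phi> x) y) J" for J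
  proof -
    obtain B where "finite_dimensional_vector_space sc B"
      using assms(2) unfolding fin_dim_def by blast
    then have "surj \<phi>"
      using finite_dimensional_vector_space.linear_inj_imp_surj lin
        nondegenerate_inner_imp_inj[OF assms(1) lin that(1)] by blast
    then show ?thesis
      using alg_ideal_inner_imp_lie_ideal that(2) by blast
  qed
qed

end
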